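(* Let $p,q>0$ and let $Z$ be a random variable with the Beta density $\frac{\Gamma(p+q)}{\Gamma(p)\Gamma(q)}x^{p-1}(1-x)^{q-1}I_{(0,1)}(x)$. Then for every $\delta>0$, $$P(|Z-E[Z]|>\delta)\le4e^{c(p+q)},\qquad\text{where } c=\log\Big(1+\frac{\delta}{3+2\delta}\Big)-\frac{\delta}{3+2\delta}.$$ *)

theory Defs
  imports "HOL-Probability.Probability"
begin

definition beta_density :: "real \<Rightarrow> real \<Rightarrow> real \<Rightarrow> real" where
  "beta_density p q x =
     indicator {0<..<1} x * (Gamma (p + q) / (Gamma p * Gamma q))
       * x powr (p - 1) * (1 - x) powr (q - 1)"

end

theory Submission
  imports Defs
begin

text \<open>
  The k-th moment of Beta(p, q) is \<open>\<Prod>i<k. (p + i) / (p + q + i)\<close>. For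
  \<open>k = \<lfloor>(p + q) \<delta> / 2\<rfloor>\<close> every factor is at most \<open>m + \<delta>/2\<close>, where
  \<open>m = p / (p + q)\<close> is the mean, so Markov's inequality for \<open>Z ^ k\<close> bounds
  \<open>P(Z \<ge> m + \<delta>)\<close> by \<open>((m + \<delta>/2) / (m + \<delta>)) ^ k \<le> exp (- \<delta> k / (2 (1 + \<delta>)))\<close>,
  which is at most \<open>2 exp (- \<delta>\<^sup>2 (p + q) / (4 (1 + \<delta>)))\<close> and hence at most
  \<open>2 exp (c (p + q))\<close>. Since \<open>1 - Z\<close> has distribution Beta(q, p), the lower
  tail is the upper tail of the reflected variable.
\<close>

definition beta_tail_exponent :: "real \<Rightarrow> real" where
  "beta_tail_exponent \<delta> = ln (1 + \<delta> / (3 + 2 * \<delta>)) - \<delta> / (3 + 2 * \<delta>)"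

lemma beta_density_nonneg:
  assumes "p > 0" "q > 0"
  shows "beta_density p q x \<ge> 0"
  using assms unfolding beta_density_def by (auto intro!: mult_nonneg_nonneg)

lemma beta_density_reflect: "beta_density q p (1 - x) = beta_density p q x"
  unfolding beta_density_def by (simp add: indicator_def ac_simps)

lemma (in prob_space) distributed_beta_reflect:
  assumes "distributed M lborel Z (\<lambda>x. ennreal (beta_density p q x))"
  shows "distributed M lborel (\<lambda>\<omega>. 1 - Z \<omega>) (\<lambda>x. ennreal (beta_density q p x))"
  using distributed_affine[OF assms, of "-1" 1] by (simp add: beta_density_reflect divide_ennreal_def)

lemma beta_density_times_power:
  "beta_density p q x * x ^ k =
     indicator {0..1} x * (x powr (p + real k - 1) * (1 - x) powr (q - 1)) / Beta p q"
proof (cases "0 < x \<and> x < 1")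
  case True
  then have "x powr (p - 1) * x ^ k = x powr (p + real k - 1)"
    by (simp add: powr_realpow[symmetric] powr_add[symmetric] algebra_simps)
  with True show ?thesis
    unfolding beta_density_def Beta_def by (simp add: indicator_def)
next
  case False
  then show ?thesis
    unfolding beta_density_def by (cases "x = 1") (auto simp: indicator_def)
qed

lemma beta_density_moment:
  assumes "p > 0" "q > 0"
  shows "integrable lborel (\<lambda>x. beta_density p q x * x ^ k)"
    and "(\<integral>x. beta_density p q x * x ^ k \<partial>lborel) = Beta (p + real k) q / Beta p q"
proof -
  have pk: "p + real k > 0" using assms by simp
  have int: "set_integrable lborel {0..1} (\<lambda>x. x powr (p + real k - 1) * (1 - x) powr (q - 1))"
    using integrable_Beta[OF pk \<open>q > 0\<close>] by simp
  then show "integrable lborel (\<lambda>x. beta_density p q x * x ^ k)"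
    unfolding beta_density_times_power set_integrable_def by simp
  have "(LINT x : {0..1} | lborel. x powr (p + real k - 1) * (1 - x) powr (q - 1)) = Beta (p + real k) q"
    using set_borel_integral_eq_integral(2)[OF int] has_integral_Beta_real[OF pk \<open>q > 0\<close>]
    by (simp add: integral_unique)
  then show "(\<integral>x. beta_density p q x * x ^ k \<partial>lborel) = Beta (p + real k) q / Beta p q"
    unfolding beta_density_times_power set_lebesgue_integral_def by simp
qed

lemma Beta_shift_left_ratio:
  fixes p q :: real
  assumes "p > 0" "q > 0"
  shows "Beta (p + real k) q / Beta p q = (\<Prod>i<k. (p + real i) / (p + q + real i))"
proof (induction k)
  case 0
  have "Beta p q > 0" using assms by (simp add: Beta_def)
  then show ?case by simp
next
  case (Suc k)
  have "p + real k \<notin> \<int>\<^sub>\<le>\<^sub>0" using assms by (auto elim!: nonpos_Ints_cases)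
  then have "(p + real k + q) * Beta (p + real k + 1) q = (p + real k) * Beta (p + real k) q"
    by (rule Beta_plus1_left)
  moreover have "p + real k + q > 0" using assms by simp
  ultimately have "Beta (p + real (Suc k)) q = (p + real k) / (p + q + real k) * Beta (p + real k) q"
    by (simp add: field_simps add_ac)
  then have "Beta (p + real (Suc k)) q / Beta p q
      = (p + real k) / (p + q + real k) * (Beta (p + real k) q / Beta p q)"
    by simp
  with Suc show ?case by (simp add: mult.commute)
qed

lemma (in prob_space) beta_distributed_moment:
  assumes "p > 0" "q > 0" and Z: "distributed M lborel Z (\<lambda>x. ennreal (beta_density p q x))"
  shows "integrable M (\<lambda>\<omega>. Z \<omega> ^ k)"
    and "expectation (\<lambda>\<omega>. Z \<omega> ^ k) = (\<Prod>i<k. (p + real i) / (p + q + real i))"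
proof -
  note density_nonneg = beta_density_nonneg[OF assms(1,2)]
  show "integrable M (\<lambda>\<omega>. Z \<omega> ^ k)"
    using distributed_integrable[OF Z, of "\<lambda>x. x ^ k"] beta_density_moment(1)[OF assms(1,2)]
      density_nonneg by simp
  have "expectation (\<lambda>\<omega>. Z \<omega> ^ k) = (\<integral>x. beta_density p q x * x ^ k \<partial>lborel)"
    using distributed_integral[OF Z, of "\<lambda>x. x ^ k"] density_nonneg by simp
  also have "\<dots> = (\<Prod>i<k. (p + real i) / (p + q + real i))"
    using beta_density_moment(2)[OF assms(1,2)] Beta_shift_left_ratio[OF assms(1,2)] by simp
  finally show "expectation (\<lambda>\<omega>. Z \<omega> ^ k) = (\<Prod>i<k. (p + real i) / (p + q + real i))" .
qed

lemma (in prob_space) beta_distributed_AE_nonneg: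
  assumes "distributed M lborel Z (\<lambda>x. ennreal (beta_density p q x))"
  shows "AE \<omega> in M. 0 \<le> Z \<omega>"
  by (subst distributed_AE2[OF assms]) (auto simp: beta_density_def indicator_def)

lemma prod_rising_ratio_le:
  fixes p n s :: real
  assumes "0 \<le> p" "0 < n" "real k \<le> n * s"
  shows "(\<Prod>i<k. (p + real i) / (n + real i)) \<le> (p / n + s) ^ k"
proof -
  have "(p + real i) / (n + real i) \<le> p / n + s" if "i < k" for i
  proof -
    have "(p + real i) / (n + real i) \<le> (p + real i) / n"
      using assms by (intro divide_left_mono) auto
    also have "\<dots> \<le> p / n + s"
      using that assms by (simp add: add_divide_distrib pos_divide_le_eq mult.commute)
    finally show ?thesis .
  qed
  then have "(\<Prod>i<k. (p + real i) / (n + real i)) \<le> (\<Prod>i<k. p / n + s)"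
    using assms by (intro prod_mono) auto
  then show ?thesis by simp
qed

lemma ratio_le_exp:
  fixes m \<delta> :: real
  assumes "0 \<le> m" "m \<le> 1" "0 < \<delta>"
  shows "(m + \<delta> / 2) / (m + \<delta>) \<le> exp (- (\<delta> / (2 * (1 + \<delta>))))"
proof -
  have "(m + \<delta> / 2) / (m + \<delta>) = 1 - (\<delta> / 2) / (m + \<delta>)"
    using assms by (simp add: field_simps)
  also have "\<dots> \<le> 1 - \<delta> / (2 * (1 + \<delta>))"
    using assms by (simp add: field_simps)
  also have "\<dots> \<le> exp (- (\<delta> / (2 * (1 + \<delta>))))"
    using exp_ge_add_one_self[of "- (\<delta> / (2 * (1 + \<delta>)))"] by simp
  finally show ?thesis .
qed

lemma beta_tail_exponent_ge:
  fixes \<delta> :: real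
  assumes "0 < \<delta>"
  shows "- (\<delta>\<^sup>2 / (4 * (1 + \<delta>))) \<le> beta_tail_exponent \<delta>"
proof -
  define t where "t = \<delta> / (3 + 2 * \<delta>)"
  have "0 \<le> t" "t \<le> 1" using assms by (auto simp: t_def field_simps)
  then have "t - t\<^sup>2 \<le> ln (1 + t)" by (rule ln_one_plus_pos_lower_bound)
  moreover have "t\<^sup>2 \<le> \<delta>\<^sup>2 / (4 * (1 + \<delta>))"
  proof -
    have "t\<^sup>2 = \<delta>\<^sup>2 / (3 + 2 * \<delta>)\<^sup>2" by (simp add: t_def power_divide)
    also have "\<dots> \<le> \<delta>\<^sup>2 / (4 * (1 + \<delta>))"
    proof (rule divide_left_mono)
      show "4 * (1 + \<delta>) \<le> (3 + 2 * \<delta>)\<^sup>2"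
        using assms by (simp add: power2_eq_square algebra_simps)
    qed (use assms in auto)
    finally show ?thesis .
  qed
  ultimately show ?thesis unfolding beta_tail_exponent_def t_def by linarith
qed

lemma exp_half_le_two: "exp (1 / 2 :: real) \<le> 2"
proof (rule power2_le_imp_le)
  have "(exp (1 / 2 :: real))\<^sup>2 = exp 1"
    by (simp add: power2_eq_square flip: exp_add)
  also have "\<dots> \<le> 2\<^sup>2"
    using exp_le by simp
  finally show "(exp (1 / 2 :: real))\<^sup>2 \<le> 2\<^sup>2" .
qed simp

lemma ratio_power_le_beta_tail_exponent:
  fixes m \<delta> n :: real
  assumes "0 \<le> m" "m \<le> 1" "0 < \<delta>" "0 < n"
  shows "((m + \<delta> / 2) / (m + \<delta>)) ^ nat \<lfloor>n * \<delta> / 2\<rfloor> \<le> 2 * exp (beta_tail_exponent \<delta> * n)"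
proof -
  define a where "a = \<delta> / (2 * (1 + \<delta>))"
  define k where "k = nat \<lfloor>n * \<delta> / 2\<rfloor>"
  have "a \<ge> 0" "a \<le> 1 / 2" using assms by (auto simp: a_def field_simps)
  have "real k \<ge> n * \<delta> / 2 - 1"
    using assms unfolding k_def by linarith
  have "((m + \<delta> / 2) / (m + \<delta>)) ^ k \<le> exp (- a) ^ k"
    using ratio_le_exp[OF assms(1-3)] assms by (intro power_mono) (auto simp: a_def)
  also have "\<dots> = exp (- a * real k)"
    by (simp flip: exp_of_nat_mult add: mult.commute)
  also have "\<dots> \<le> exp (- a * (n * \<delta> / 2 - 1))"
    using \<open>real k \<ge> _\<close> \<open>a \<ge> 0\<close> by (intro exp_mono) (simp add: mult_left_mono)
  also have "\<dots> = exp a * exp (- (\<delta>\<^sup>2 / (4 * (1 + \<delta>))) * n)"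
  proof -
    have "- a * (n * \<delta> / 2 - 1) = a + - (\<delta>\<^sup>2 / (4 * (1 + \<delta>))) * n"
      using \<open>0 < \<delta>\<close> unfolding a_def
      by (simp add: power2_eq_square divide_simps) (simp add: algebra_simps)
    then show ?thesis by (simp only: exp_add)
  qed
  also have "\<dots> \<le> 2 * exp (beta_tail_exponent \<delta> * n)"
  proof (intro mult_mono)
    show "exp a \<le> 2"
      using \<open>a \<le> 1 / 2\<close> exp_half_le_two by (meson exp_le_cancel_iff order_trans)
    show "exp (- (\<delta>\<^sup>2 / (4 * (1 + \<delta>))) * n) \<le> exp (beta_tail_exponent \<delta> * n)"
      using beta_tail_exponent_ge[OF assms(3)] assms by (intro exp_mono mult_right_mono) auto
  qed auto
  finally show ?thesis unfolding k_def .
qed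

lemma (in prob_space) beta_upper_tail:
  assumes p: "p > 0" and q: "q > 0" and \<delta>: "\<delta> > 0"
    and Z: "distributed M lborel Z (\<lambda>x. ennreal (beta_density p q x))"
  shows "prob {\<omega> \<in> space M. p / (p + q) + \<delta> \<le> Z \<omega>} \<le> 2 * exp (beta_tail_exponent \<delta> * (p + q))"
proof -
  define n where "n = p + q"
  define m where "m = p / n"
  define k where "k = nat \<lfloor>n * \<delta> / 2\<rfloor>"
  have "n > 0" "0 \<le> m" "m \<le> 1" using p q by (auto simp: n_def m_def)
  have [measurable]: "Z \<in> borel_measurable M"
    using distributed_measurable[OF Z] by simp
  have "prob {\<omega> \<in> space M. m + \<delta> \<le> Z \<omega>} \<le> prob {\<omega> \<in> space M. (m + \<delta>) ^ k \<le> Z \<omega> ^ k}"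
    using \<open>0 \<le> m\<close> \<delta> by (intro finite_measure_mono) (auto intro: power_mono)
  also have "\<dots> \<le> expectation (\<lambda>\<omega>. Z \<omega> ^ k) / (m + \<delta>) ^ k"
    using beta_distributed_moment(1)[OF p q Z] beta_distributed_AE_nonneg[OF Z] \<open>0 \<le> m\<close> \<delta>
    by (intro integral_Markov_inequality_measure) auto
  also have "\<dots> = (\<Prod>i<k. (p + real i) / (n + real i)) / (m + \<delta>) ^ k"
    using beta_distributed_moment(2)[OF p q Z] by (simp add: n_def)
  also have "\<dots> \<le> (m + \<delta> / 2) ^ k / (m + \<delta>) ^ k"
  proof (intro divide_right_mono)
    have "0 \<le> n * \<delta> / 2" using \<open>n > 0\<close> \<delta> by simp
    then have "real k \<le> n * (\<delta> / 2)"
      using of_int_floor_le[of "n * \<delta> / 2"] unfolding k_def by (simp add: of_nat_nat)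
    then show "(\<Prod>i<k. (p + real i) / (n + real i)) \<le> (m + \<delta> / 2) ^ k"
      unfolding m_def using p \<open>n > 0\<close> by (intro prod_rising_ratio_le) auto
  qed (use \<open>0 \<le> m\<close> \<delta> in simp)
  also have "\<dots> = ((m + \<delta> / 2) / (m + \<delta>)) ^ k"
    by (simp add: power_divide)
  also have "\<dots> \<le> 2 * exp (beta_tail_exponent \<delta> * n)"
    unfolding k_def using \<open>0 \<le> m\<close> \<open>m \<le> 1\<close> \<delta> \<open>n > 0\<close> by (rule ratio_power_le_beta_tail_exponent)
  finally show ?thesis by (simp add: m_def n_def)
qed

theorem lemmaA1:
  fixes M :: "'a measure" and Z :: "'a \<Rightarrow> real" and p q \<delta> :: real
  assumes "prob_space M"
    and "p > 0" and "q > 0"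
    and "distributed M lborel Z (\<lambda>x. ennreal (beta_density p q x))"
    and "\<delta> > 0"
  shows "measure M {\<omega> \<in> space M. \<bar>Z \<omega> - (\<integral>\<omega>'. Z \<omega>' \<partial>M)\<bar> > \<delta>}
           \<le> 4 * exp ((ln (1 + \<delta> / (3 + 2 * \<delta>)) - \<delta> / (3 + 2 * \<delta>)) * (p + q))"
proof -
  interpret prob_space M by fact
  note p = \<open>p > 0\<close> and q = \<open>q > 0\<close> and Z = \<open>distributed M lborel Z _\<close> and \<delta> = \<open>\<delta> > 0\<close>
  have [measurable]: "Z \<in> borel_measurable M"
    using distributed_measurable[OF Z] by simp
  define upper where "upper = {\<omega> \<in> space M. p / (p + q) + \<delta> \<le> Z \<omega>}"
  define lower where "lower = {\<omega> \<in> space M. q / (q + p) + \<delta> \<le> 1 - Z \<omega>}"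
  have "expectation Z = p / (p + q)"
    using beta_distributed_moment(2)[OF p q Z, of 1] by simp
  moreover have "q / (q + p) = 1 - p / (p + q)"
    using p q by (simp add: field_simps)
  ultimately have "{\<omega> \<in> space M. \<bar>Z \<omega> - expectation Z\<bar> > \<delta>} \<subseteq> upper \<union> lower"
    by (auto simp: upper_def lower_def)
  then have "prob {\<omega> \<in> space M. \<bar>Z \<omega> - expectation Z\<bar> > \<delta>} \<le> prob upper + prob lower"
    by (intro order.trans[OF finite_measure_mono measure_Un_le])
      (auto simp: upper_def lower_def)
  also have "\<dots> \<le> 2 * exp (beta_tail_exponent \<delta> * (p + q)) + 2 * exp (beta_tail_exponent \<delta> * (q + p))"
    unfolding upper_def lower_def
    by (intro add_mono beta_upper_tail p q \<delta> Z distributed_beta_reflect)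
  finally show ?thesis
    by (simp add: beta_tail_exponent_def add.commute)
qed

end
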